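(* Let $A,B,C,D$ be smooth real functions on an open subset of $\mathbb R^4$ with coordinates $(x_0,x_1,x_2,x_3)$, $\partial_i=\partial/\partial x_i$, and let $h$ be the $H$-valued map $h=\begin{pmatrix}1&A&B&D\\0&1&A&C\\0&0&1&A\\0&0&0&1\end{pmatrix}$. Let $(V_0,V_1,V_2,V_3)$ be the framing dual to the coframing $h\,\mathrm dx$, explicitly $$V_0=\partial_0,\quad V_1=\partial_1-A\partial_0,\quad V_2=\partial_2-A\partial_1-(B-A^2)\partial_0,$$ $$V_3=\partial_3-A\partial_2-(C-A^2)\partial_1-(D-(C+B)A+A^3)\partial_0.$$ Then the $\mathrm{GL}(2)$-structure containing the coframing $h\,\mathrm dx$ is torsion-free if and only if $$\begin{aligned} &V_2(D)-V_3(B)-AV_2(B)-CV_2(A)+AV_3(A)+A^2V_2(A)=0,\\ &2V_1(D)-V_2(C)-2AV_1(B)-V_3(A)+AV_2(A)+2A^2V_1(A)-2CV_1(A)=0,\\ &V_0(D)-2V_1(C)+3V_1(B)-AV_0(B)-2V_2(A)-AV_1(A)-CV_0(A)+A^2V_0(A)=0,\\ &V_0(C)-2V_0(B)+V_1(A)+AV_0(A)=0. \end{aligned}$$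
   Context: $\mathcal V_3$ is the space of real binary cubic forms in $x,y$ with the linear-substitution action of $\mathrm{GL}(2,\mathbb R)$; $G_3\subset\mathrm{GL}(\mathcal V_3)$ is its image, and $\mathcal V_3\cong\mathbb R^4$ via $x^{3-i}y^i\mapsto e_{i+1}$. A $\mathrm{GL}(2)$-structure is a $G_3$-structure (reduction of the coframe bundle, coframes valued in $\mathbb R^4$, to $G_3$); the $\mathrm{GL}(2)$-structure containing a coframing $\eta$ is the one whose fibre at each point is the $G_3$-orbit of $\eta$. It is torsion-free if there is a principal $G_3$-connection $\theta$ with $\mathrm d\omega=-\theta\wedge\omega$ for the tautological form $\omega$. *)

theory Defs
  imports "HOL-Analysis.Analysis"
begin

definition pd :: "4 \<Rightarrow> (real^4 \<Rightarrow> real) \<Rightarrow> real^4 \<Rightarrow> real" where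
  "pd i f x = frechet_derivative f (at x) (axis i 1)"

fun Ck :: "nat \<Rightarrow> (real^4) set \<Rightarrow> (real^4 \<Rightarrow> real) \<Rightarrow> bool" where
  "Ck 0 U f = continuous_on U f"
| "Ck (Suc k) U f = ((\<forall>x\<in>U. f differentiable (at x)) \<and> (\<forall>i. Ck k U (pd i f)))"

definition smooth_on :: "(real^4) set \<Rightarrow> (real^4 \<Rightarrow> real) \<Rightarrow> bool" where
  "smooth_on U f \<longleftrightarrow> (\<forall>k. Ck k U f)"

text \<open>Binary cubic form with coefficient vector v (x^(3-i) y^i <-> e_(i+1), index i here).\<close>
definition cubic :: "real^4 \<Rightarrow> real \<Rightarrow> real \<Rightarrow> real" where
  "cubic v x y = v$0 * x^3 + v$1 * x^2 * y + v$2 * x * y^2 + v$3 * y^3"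

definition G3 :: "(real^4^4) set" where
  "G3 = {M. \<exists>a b c d. a * d - b * c \<noteq> 0 \<and>
           (\<forall>v x y. cubic (M *v v) x y = cubic v (a * x + b * y) (c * x + d * y))}"

definition g3 :: "(real^4^4) set" where
  "g3 = {X. \<exists>\<gamma>. \<gamma> 0 = mat 1 \<and> (\<forall>t. \<gamma> t \<in> G3) \<and> (\<gamma> has_vector_derivative X) (at 0)}"

text \<open>A coframing eta on U: eta p $ a $ j is the coefficient of dx^j in eta^a at p.
  The G_3-structure containing eta is torsion-free iff there is a (smooth) principal
  G_3-connection, equivalently (pulling back along the section eta) a smooth
  g_3-valued 1-form theta on U (theta p j = theta(d/dx_j) at p) with
  d eta = - theta \<and> eta.\<close>
definition torsion_free_Gstr :: "(real^4) set \<Rightarrow> (real^4 \<Rightarrow> real^4^4) \<Rightarrow> bool" where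
  "torsion_free_Gstr U \<eta> \<longleftrightarrow>
    (\<exists>\<theta> :: real^4 \<Rightarrow> 4 \<Rightarrow> real^4^4.
       (\<forall>j a b. smooth_on U (\<lambda>p. \<theta> p j $ a $ b)) \<and>
       (\<forall>p\<in>U. \<forall>j. \<theta> p j \<in> g3) \<and>
       (\<forall>p\<in>U. \<forall>a j k.
          pd j (\<lambda>q. \<eta> q $ a $ k) p - pd k (\<lambda>q. \<eta> q $ a $ j) p
          = - (\<Sum>b\<in>UNIV. \<theta> p j $ a $ b * \<eta> p $ b $ k - \<theta> p k $ a $ b * \<eta> p $ b $ j)))"

definition hmat :: "(real^4 \<Rightarrow> real) \<Rightarrow> (real^4 \<Rightarrow> real) \<Rightarrow> (real^4 \<Rightarrow> real) \<Rightarrow> (real^4 \<Rightarrow> real)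
                    \<Rightarrow> real^4 \<Rightarrow> real^4^4" where
  "hmat A B C D p = (\<chi> a j.
     if a = j then 1
     else if (a = 0 \<and> j = 1) \<or> (a = 1 \<and> j = 2) \<or> (a = 2 \<and> j = 3) then A p
     else if a = 0 \<and> j = 2 then B p
     else if a = 1 \<and> j = 3 then C p
     else if a = 0 \<and> j = 3 then D p
     else 0)"

definition V0 :: "(real^4 \<Rightarrow> real) \<Rightarrow> real^4 \<Rightarrow> real" where
  "V0 f p = pd 0 f p"
definition V1 :: "(real^4 \<Rightarrow> real) \<Rightarrow> (real^4 \<Rightarrow> real) \<Rightarrow> real^4 \<Rightarrow> real" where
  "V1 A f p = pd 1 f p - A p * pd 0 f p"
definition V2 :: "(real^4 \<Rightarrow> real) \<Rightarrow> (real^4 \<Rightarrow> real) \<Rightarrow> (real^4 \<Rightarrow> real) \<Rightarrow> real^4 \<Rightarrow> real" where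
  "V2 A B f p = pd 2 f p - A p * pd 1 f p - (B p - (A p)^2) * pd 0 f p"
definition V3 :: "(real^4 \<Rightarrow> real) \<Rightarrow> (real^4 \<Rightarrow> real) \<Rightarrow> (real^4 \<Rightarrow> real) \<Rightarrow> (real^4 \<Rightarrow> real)
                  \<Rightarrow> (real^4 \<Rightarrow> real) \<Rightarrow> real^4 \<Rightarrow> real" where
  "V3 A B C D f p = pd 3 f p - A p * pd 2 f p - (C p - (A p)^2) * pd 1 f p
      - (D p - (C p + B p) * A p + (A p)^3) * pd 0 f p"

end

theory Submission
  imports Defs
begin

text \<open>
  Write a connection form in the coframe \<eta> = h dx as \<theta> = \<Sum>c \<eta>^c \<phi>_c with \<phi>_c in the Lie
  algebra g3 = gl(2). The structure equation d\<eta> = - \<theta> \<and> \<eta> becomes \<tau> = - \<delta>\<phi>, where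
  \<tau>^a_cb = d\<eta>^a(V_c, V_b) are the components of d\<eta> in the dual frame V_0, ..., V_3 and
  (\<delta>\<phi>)^a_cb = (\<phi>_c)^a_b - (\<phi>_b)^a_c is the Spencer map of g3, a linear map with constant
  coefficients from a 16- to a 24-dimensional space. It is injective, and its range is the
  common kernel of eight linear functionals. For the coframe h dx four of them vanish
  identically and the other four are the expressions of the theorem. Conversely, when they
  vanish an explicit left inverse of - \<delta> yields \<phi>, hence a connection that is polynomial in
  A, B, C, D and their first derivatives, so smooth.

  The Lie algebra g3 itself is found by differentiating, at the identity, twelve quadrics that
  vanish on G3.
\<close>

lemma sum_UNIV_4: "(\<Sum>i\<in>(UNIV::4 set). f i) = f 0 + f 1 + f 2 + f 3"
proof -
  have four: "(4::4) = 0"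
    by simp
  show ?thesis
    unfolding sum_4 four by (simp add: ac_simps)
qed

lemma forall_UNIV_4: "(\<forall>i::4. P i) \<longleftrightarrow> P 0 \<and> P 1 \<and> P 2 \<and> P 3"
proof -
  have four: "(4::4) = 0"
    by simp
  show ?thesis
    unfolding forall_4 four by blast
qed

section \<open>Smooth functions\<close>

lemma pd_const [simp]: "pd i (\<lambda>x. c) p = 0"
  by (simp add: pd_def)

lemma pd_cong_open:
  assumes "open U" "x \<in> U" "\<And>y. y \<in> U \<Longrightarrow> f y = g y"
  shows "pd i f x = pd i g x"
proof -
  have "(f has_derivative D) (at x) \<longleftrightarrow> (g has_derivative D) (at x)" for D
    using has_derivative_transform_within_open[OF _ assms(1,2)] assms(3) by metis
  then show ?thesis
    unfolding pd_def frechet_derivative_def by simp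
qed

lemma differentiable_cong_open:
  assumes "open U" "x \<in> U" "\<And>y. y \<in> U \<Longrightarrow> f y = g y" "f differentiable (at x)"
  shows "g differentiable (at x)"
  using assms has_derivative_transform_within_open[OF _ assms(1,2)]
  unfolding differentiable_def by metis

lemma Ck_cong_open:
  assumes "open U" "\<And>y. y \<in> U \<Longrightarrow> f y = g y" "Ck k U f"
  shows "Ck k U g"
  using assms(2,3)
proof (induction k arbitrary: f g)
  case 0
  then show ?case
    using continuous_on_cong by (metis Ck.simps(1))
next
  case (Suc k)
  have "g differentiable (at x)" if "x \<in> U" for x
  proof (rule differentiable_cong_open[OF assms(1) that Suc.prems(1)])
    show "f differentiable (at x)"
      using Suc.prems(2) that by simp
  qed
  moreover have "Ck k U (pd i g)" for i
  proof (rule Suc.IH)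
    show "pd i f y = pd i g y" if "y \<in> U" for y
      using pd_cong_open[OF assms(1) that Suc.prems(1)] .
    show "Ck k U (pd i f)"
      using Suc.prems(2) by simp
  qed
  ultimately show ?case
    by simp
qed

lemma Ck_SucD: "Ck (Suc k) U f \<Longrightarrow> Ck k U f"
proof (induction k arbitrary: f)
  case 0
  then show ?case
    by (auto intro!: differentiable_imp_continuous_on differentiable_at_imp_differentiable_on)
next
  case (Suc k)
  then show ?case
    by (simp only: Ck.simps) blast
qed

lemma Ck_const: "Ck k U (\<lambda>x. c)"
proof (induction k arbitrary: c)
  case (Suc k)
  have "pd i (\<lambda>x. c) = (\<lambda>x. 0)" for i
    by (simp add: fun_eq_iff)
  with Suc show ?case
    by simp
qed simp

lemma pd_add:
  assumes "f differentiable (at x)" "g differentiable (at x)"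
  shows "pd i (\<lambda>x. f x + g x) x = pd i f x + pd i g x"
proof -
  have "((\<lambda>x. f x + g x) has_derivative
         (\<lambda>h. frechet_derivative f (at x) h + frechet_derivative g (at x) h)) (at x)"
    using assms by (intro has_derivative_add) (simp_all add: frechet_derivative_works)
  then show ?thesis
    unfolding pd_def by (simp add: frechet_derivative_at[symmetric])
qed

lemma pd_mult:
  assumes "f differentiable (at x)" "g differentiable (at x)"
  shows "pd i (\<lambda>x. f x * g x) x = f x * pd i g x + pd i f x * g x"
proof -
  have "((\<lambda>x. f x * g x) has_derivative
         (\<lambda>h. f x * frechet_derivative g (at x) h + frechet_derivative f (at x) h * g x)) (at x)"
    using assms by (intro has_derivative_mult) (simp_all add: frechet_derivative_works)
  then show ?thesis
    unfolding pd_def by (simp add: frechet_derivative_at[symmetric])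
qed

lemma Ck_add:
  assumes "open U" "Ck k U f" "Ck k U g"
  shows "Ck k U (\<lambda>x. f x + g x)"
  using assms(2,3)
proof (induction k arbitrary: f g)
  case (Suc k)
  have "Ck k U (pd i (\<lambda>x. f x + g x))" for i
  proof (rule Ck_cong_open[OF assms(1)])
    show "Ck k U (\<lambda>x. pd i f x + pd i g x)"
      using Suc by simp
  qed (use Suc.prems in \<open>simp add: pd_add\<close>)
  with Suc.prems show ?case
    by (auto intro: differentiable_add)
qed (auto intro: continuous_on_add)

lemma Ck_mult:
  assumes "open U" "Ck k U f" "Ck k U g"
  shows "Ck k U (\<lambda>x. f x * g x)"
  using assms(2,3)
proof (induction k arbitrary: f g)
  case (Suc k)
  have "Ck k U (pd i (\<lambda>x. f x * g x))" for i
  proof (rule Ck_cong_open[OF assms(1)])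
    show "Ck k U (\<lambda>x. f x * pd i g x + pd i f x * g x)"
      using Suc Ck_SucD by (intro Ck_add[OF assms(1)] Suc.IH) simp_all
  qed (use Suc.prems in \<open>simp add: pd_mult\<close>)
  with Suc.prems show ?case
    by (auto intro: differentiable_mult)
qed (auto intro: continuous_on_mult)

lemma smooth_on_const: "smooth_on U (\<lambda>x. c)"
  by (simp add: smooth_on_def Ck_const)

lemma smooth_on_add:
  "open U \<Longrightarrow> smooth_on U f \<Longrightarrow> smooth_on U g \<Longrightarrow> smooth_on U (\<lambda>x. f x + g x)"
  by (simp add: smooth_on_def Ck_add)

lemma smooth_on_mult:
  "open U \<Longrightarrow> smooth_on U f \<Longrightarrow> smooth_on U g \<Longrightarrow> smooth_on U (\<lambda>x. f x * g x)"
  by (simp add: smooth_on_def Ck_mult)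

lemma smooth_on_minus:
  assumes "open U" "smooth_on U f"
  shows "smooth_on U (\<lambda>x. - f x)"
  using smooth_on_mult[OF assms(1) smooth_on_const assms(2), of "- 1"] by simp

lemma smooth_on_diff:
  assumes "open U" "smooth_on U f" "smooth_on U g"
  shows "smooth_on U (\<lambda>x. f x - g x)"
  using smooth_on_add[OF assms(1,2) smooth_on_minus[OF assms(1,3)]] by simp

lemma smooth_on_divide:
  assumes "open U" "smooth_on U f"
  shows "smooth_on U (\<lambda>x. f x / r)"
  using smooth_on_mult[OF assms smooth_on_const, of "1 / r"] by simp

lemma smooth_on_power:
  assumes "open U" "smooth_on U f"
  shows "smooth_on U (\<lambda>x. f x ^ n)"
proof (induction n)
  case 0
  then show ?case
    by (simp add: smooth_on_const)
next
  case (Suc n)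
  then show ?case
    using smooth_on_mult[OF assms Suc.IH] by simp
qed

lemma smooth_on_sum:
  assumes "open U" "finite S" "\<And>i. i \<in> S \<Longrightarrow> smooth_on U (f i)"
  shows "smooth_on U (\<lambda>x. \<Sum>i\<in>S. f i x)"
  using assms(2,3)
  by (induction S rule: finite_induct) (auto intro: smooth_on_add[OF assms(1)] smooth_on_const)

lemma smooth_on_pd: "smooth_on U f \<Longrightarrow> smooth_on U (pd i f)"
  unfolding smooth_on_def by (metis Ck.simps(2))

lemmas smooth_on_closure = smooth_on_const smooth_on_add smooth_on_diff smooth_on_minus
  smooth_on_mult smooth_on_divide smooth_on_power smooth_on_sum smooth_on_pd

section \<open>The group G3 and its Lie algebra\<close>

definition rho3 :: "real \<Rightarrow> real \<Rightarrow> real \<Rightarrow> real \<Rightarrow> real^4^4" where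
  "rho3 a b c d = (\<chi> i j.
     if i = 0 then (if j = 0 then a^3 else if j = 1 then a^2*c else if j = 2 then a*c^2 else c^3)
     else if i = 1 then (if j = 0 then 3*a^2*b else if j = 1 then a^2*d + 2*a*b*c
       else if j = 2 then b*c^2 + 2*a*c*d else 3*c^2*d)
     else if i = 2 then (if j = 0 then 3*a*b^2 else if j = 1 then 2*a*b*d + b^2*c
       else if j = 2 then a*d^2 + 2*b*c*d else 3*c*d^2)
     else (if j = 0 then b^3 else if j = 1 then b^2*d else if j = 2 then b*d^2 else d^3))"

text \<open>The derivative of \<open>rho3 (1 + t*a) (t*b) (t*c) (1 + t*d)\<close> at \<open>t = 0\<close>.\<close>

definition drho3 :: "real \<Rightarrow> real \<Rightarrow> real \<Rightarrow> real \<Rightarrow> real^4^4" where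
  "drho3 a b c d = (\<chi> i j.
     if i = 0 then (if j = 0 then 3*a else if j = 1 then c else 0)
     else if i = 1 then (if j = 0 then 3*b else if j = 1 then 2*a + d else if j = 2 then 2*c else 0)
     else if i = 2 then (if j = 1 then 2*b else if j = 2 then a + 2*d else if j = 3 then 3*c else 0)
     else (if j = 2 then b else if j = 3 then 3*d else 0))"

lemma cubic_rho3: "cubic (rho3 a b c d *v v) x y = cubic v (a*x + b*y) (c*x + d*y)"
  unfolding cubic_def matrix_vector_mult_def
  by (simp add: sum_UNIV_4 rho3_def) algebra

lemma cubic_eqI:
  assumes "\<And>x y. cubic v x y = cubic w x y"
  shows "v = w"
  using assms[of 1 0] assms[of 0 1] assms[of 1 1] assms[of 1 "-1"]
  unfolding cubic_def vec_eq_iff forall_UNIV_4 by simp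

lemma G3_eq: "G3 = {rho3 a b c d |a b c d. a * d - b * c \<noteq> 0}"
proof (intro equalityI subsetI)
  fix M assume "M \<in> G3"
  then obtain a b c d where det: "a * d - b * c \<noteq> 0"
    and M: "\<And>v x y. cubic (M *v v) x y = cubic v (a*x + b*y) (c*x + d*y)"
    unfolding G3_def by blast
  have "M *v v = rho3 a b c d *v v" for v
    by (rule cubic_eqI) (simp add: M cubic_rho3)
  then have "M = rho3 a b c d"
    by (simp add: matrix_eq)
  with det show "M \<in> {rho3 a b c d |a b c d. a * d - b * c \<noteq> 0}"
    by blast
next
  fix M assume "M \<in> {rho3 a b c d |a b c d. a * d - b * c \<noteq> 0}"
  then show "M \<in> G3"
    unfolding G3_def using cubic_rho3 by blast
qed

lemma rho3_in_G3: "a * d - b * c \<noteq> 0 \<Longrightarrow> rho3 a b c d \<in> G3"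
  unfolding G3_eq by blast

lemma rho3_id: "rho3 1 0 0 1 = mat 1"
  unfolding vec_eq_iff forall_UNIV_4 by (simp add: rho3_def mat_def)

lemma has_vector_derivative_matrixI:
  fixes \<gamma> :: "real \<Rightarrow> real^'n^'m"
  assumes "\<And>i j. ((\<lambda>t. \<gamma> t $ i $ j) has_real_derivative X $ i $ j) (at t0)"
  shows "(\<gamma> has_vector_derivative X) (at t0)"
  unfolding has_vector_derivative_def
proof (subst has_derivative_componentwise_within, intro ballI)
  fix b :: "real^'n^'m" assume "b \<in> Basis"
  then obtain i j where b: "b = axis i (axis j 1)"
    by (auto simp: Basis_vec_def)
  show "((\<lambda>t. \<gamma> t \<bullet> b) has_derivative (\<lambda>h. (h *\<^sub>R X) \<bullet> b)) (at t0)"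
    using assms[of i j] by (simp add: b inner_axis has_field_derivative_def mult.commute[of _ "X $ i $ j"])
qed

lemma drho3_in_g3: "drho3 a b c d \<in> g3"
proof -
  define \<Delta> where "\<Delta> t = (1 + t*a) * (1 + t*d) - (t*b) * (t*c)" for t
  \<comment> \<open>where the straight line leaves GL(2) it is replaced by the identity, which does not
    affect the derivative at 0\<close>
  define \<gamma> where "\<gamma> t = (if \<Delta> t \<noteq> 0 then rho3 (1 + t*a) (t*b) (t*c) (1 + t*d) else mat 1)" for t
  have "\<forall>i j. ((\<lambda>t. rho3 (1 + t*a) (t*b) (t*c) (1 + t*d) $ i $ j) has_real_derivative
      drho3 a b c d $ i $ j) (at 0)"
    unfolding forall_UNIV_4 by (simp add: rho3_def drho3_def) (auto intro!: derivative_eq_intros)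
  then have "((\<lambda>t. rho3 (1 + t*a) (t*b) (t*c) (1 + t*d)) has_vector_derivative drho3 a b c d) (at 0)"
    by (intro has_vector_derivative_matrixI) blast
  moreover have "open {t. \<Delta> t \<noteq> 0}"
    unfolding \<Delta>_def by (rule open_Collect_neq) (intro continuous_intros)+
  ultimately have "(\<gamma> has_vector_derivative drho3 a b c d) (at 0)"
    by (rule has_vector_derivative_transform_within_open) (auto simp: \<gamma>_def \<Delta>_def)
  moreover have "\<gamma> t \<in> G3" for t
    using rho3_in_G3[where a = "1 + t*a" and b = "t*b" and c = "t*c" and d = "1 + t*d"]
      rho3_in_G3[where a = 1 and b = 0 and c = 0 and d = 1]
    by (simp add: \<gamma>_def \<Delta>_def rho3_id)
  moreover have "\<gamma> 0 = mat 1"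
    by (simp add: \<gamma>_def \<Delta>_def rho3_id)
  ultimately show ?thesis
    unfolding g3_def by blast
qed

lemma g3_tangent_quadric:
  fixes q :: "real^4^4 \<Rightarrow> real^4^4 \<Rightarrow> real"
  assumes "bilinear q" "\<And>M. M \<in> G3 \<Longrightarrow> q M M = 0" "X \<in> g3"
  shows "q X (mat 1) + q (mat 1) X = 0"
proof -
  obtain \<gamma> where \<gamma>0: "\<gamma> 0 = mat 1" and "\<And>t. \<gamma> t \<in> G3"
    and \<gamma>': "(\<gamma> has_derivative (\<lambda>h. h *\<^sub>R X)) (at 0)"
    using assms(3) unfolding g3_def has_vector_derivative_def by blast
  then have "((\<lambda>t. q (\<gamma> t) (\<gamma> t)) has_derivative (\<lambda>h. 0)) (at 0)"
    using assms(2) by (simp add: has_derivative_const)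
  moreover have "((\<lambda>t. q (\<gamma> t) (\<gamma> t)) has_derivative
      (\<lambda>h. q (\<gamma> 0) (h *\<^sub>R X) + q (h *\<^sub>R X) (\<gamma> 0))) (at 0)"
    using bounded_bilinear.FDERIV[OF assms(1)[unfolded bilinear_conv_bounded_bilinear] \<gamma>' \<gamma>'] .
  ultimately have "(\<lambda>h::real. 0) = (\<lambda>h. q (\<gamma> 0) (h *\<^sub>R X) + q (h *\<^sub>R X) (\<gamma> 0))"
    by (rule has_derivative_unique)
  from fun_cong[OF this, of 1] \<gamma>0 show ?thesis
    by simp
qed

lemma rho3_quadrics:
  fixes a b c d :: real
  defines "M \<equiv> rho3 a b c d"
  shows "M$0$1 * M$0$1 - M$0$0 * M$0$2 = 0"
    and "M$0$1 * M$0$2 - M$0$0 * M$0$3 = 0"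
    and "M$1$0 * M$1$0 - 3 * (M$0$0 * M$2$0) = 0"
    and "M$2$3 * M$2$3 - 3 * (M$1$3 * M$3$3) = 0"
    and "M$3$1 * M$3$2 - M$3$0 * M$3$3 = 0"
    and "M$3$2 * M$3$2 - M$3$1 * M$3$3 = 0"
    and "M$0$0 * M$1$2 - 2 * (M$0$1 * M$1$1) + M$0$2 * M$1$0 = 0"
    and "M$2$1 * M$3$3 - 2 * (M$2$2 * M$3$2) + M$2$3 * M$3$1 = 0"
    and "M$1$1 * M$2$3 - 3 * (M$0$1 * M$3$3) - 6 * (M$0$2 * M$3$2) = 0"
    and "M$1$0 * M$2$2 - 3 * (M$0$0 * M$3$2) - 6 * (M$0$1 * M$3$1) = 0"
    and "M$1$1 * M$1$1 - M$0$0 * M$2$2 - M$0$1 * M$2$1 - M$0$2 * M$2$0 = 0"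
    and "M$2$2 * M$2$2 - M$1$1 * M$3$3 - M$1$2 * M$3$2 - M$1$3 * M$3$1 = 0"
  unfolding M_def by (simp_all add: rho3_def) algebra+

lemma in_g3_iff: "X \<in> g3 \<longleftrightarrow> (\<exists>a b c d. X = drho3 a b c d)"
proof
  assume X: "X \<in> g3"
  have tangent: "q X (mat 1) + q (mat 1) X = 0"
    if "bilinear q" "\<And>a b c d. q (rho3 a b c d) (rho3 a b c d) = 0"
    for q :: "real^4^4 \<Rightarrow> real^4^4 \<Rightarrow> real"
    using g3_tangent_quadric[OF that(1) _ X] that(2) unfolding G3_eq by blast
  note quadric_simps = bilinear_def linear_iff algebra_simps mat_def
  have "X$0$2 = 0"
    using tangent[of "\<lambda>M N. M$0$1 * N$0$1 - M$0$0 * N$0$2"] rho3_quadrics(1)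
    by (simp add: quadric_simps)
  moreover have "X$0$3 = 0"
    using tangent[of "\<lambda>M N. M$0$1 * N$0$2 - M$0$0 * N$0$3"] rho3_quadrics(2)
    by (simp add: quadric_simps)
  moreover have "X$2$0 = 0"
    using tangent[of "\<lambda>M N. M$1$0 * N$1$0 - 3 * (M$0$0 * N$2$0)"] rho3_quadrics(3)
    by (simp add: quadric_simps)
  moreover have "X$1$3 = 0"
    using tangent[of "\<lambda>M N. M$2$3 * N$2$3 - 3 * (M$1$3 * N$3$3)"] rho3_quadrics(4)
    by (simp add: quadric_simps)
  moreover have "X$3$0 = 0"
    using tangent[of "\<lambda>M N. M$3$1 * N$3$2 - M$3$0 * N$3$3"] rho3_quadrics(5)
    by (simp add: quadric_simps)
  moreover have "X$3$1 = 0"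
    using tangent[of "\<lambda>M N. M$3$2 * N$3$2 - M$3$1 * N$3$3"] rho3_quadrics(6)
    by (simp add: quadric_simps)
  moreover have "X$1$2 = 2 * X$0$1"
    using tangent[of "\<lambda>M N. M$0$0 * N$1$2 - 2 * (M$0$1 * N$1$1) + M$0$2 * N$1$0"] rho3_quadrics(7)
    by (simp add: quadric_simps)
  moreover have "X$2$1 = 2 * X$3$2"
    using tangent[of "\<lambda>M N. M$2$1 * N$3$3 - 2 * (M$2$2 * N$3$2) + M$2$3 * N$3$1"] rho3_quadrics(8)
    by (simp add: quadric_simps)
  moreover have "X$2$3 = 3 * X$0$1"
    using tangent[of "\<lambda>M N. M$1$1 * N$2$3 - 3 * (M$0$1 * N$3$3) - 6 * (M$0$2 * N$3$2)"] rho3_quadrics(9)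
    by (simp add: quadric_simps)
  moreover have "X$1$0 = 3 * X$3$2"
    using tangent[of "\<lambda>M N. M$1$0 * N$2$2 - 3 * (M$0$0 * N$3$2) - 6 * (M$0$1 * N$3$1)"] rho3_quadrics(10)
    by (simp add: quadric_simps)
  moreover have "2 * X$1$1 = X$0$0 + X$2$2"
    using tangent[of "\<lambda>M N. M$1$1 * N$1$1 - M$0$0 * N$2$2 - M$0$1 * N$2$1 - M$0$2 * N$2$0"] rho3_quadrics(11)
    by (simp add: quadric_simps)
  moreover have "2 * X$2$2 = X$1$1 + X$3$3"
    using tangent[of "\<lambda>M N. M$2$2 * N$2$2 - M$1$1 * N$3$3 - M$1$2 * N$3$2 - M$1$3 * N$3$1"] rho3_quadrics(12)
    by (simp add: quadric_simps)
  ultimately have "X = drho3 (X$0$0 / 3) (X$3$2) (X$0$1) (X$3$3 / 3)"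
    unfolding vec_eq_iff forall_UNIV_4 by (simp add: drho3_def)
  then show "\<exists>a b c d. X = drho3 a b c d"
    by blast
qed (auto simp: drho3_in_g3)

lemma subspace_g3: "subspace g3"
proof (unfold subspace_def, intro conjI ballI allI)
  have "drho3 0 0 0 0 = 0"
    by (simp add: vec_eq_iff drho3_def)
  then show "0 \<in> g3"
    using drho3_in_g3 by metis
next
  fix X Y assume "X \<in> g3" "Y \<in> g3"
  then obtain a b c d a' b' c' d' where "X = drho3 a b c d" "Y = drho3 a' b' c' d'"
    unfolding in_g3_iff by blast
  then have "X + Y = drho3 (a + a') (b + b') (c + c') (d + d')"
    by (simp add: vec_eq_iff drho3_def algebra_simps)
  then show "X + Y \<in> g3"
    using drho3_in_g3 by metis
next
  fix r X assume "X \<in> g3"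
  then obtain a b c d where "X = drho3 a b c d"
    unfolding in_g3_iff by blast
  then have "r *\<^sub>R X = drho3 (r * a) (r * b) (r * c) (r * d)"
    by (simp add: vec_eq_iff drho3_def algebra_simps)
  then show "r *\<^sub>R X \<in> g3"
    using drho3_in_g3 by metis
qed

section \<open>The Spencer map and change of frame\<close>

definition spencer_delta :: "('n \<Rightarrow> real^'n^'n) \<Rightarrow> 'n \<Rightarrow> 'n \<Rightarrow> 'n \<Rightarrow> real" where
  "spencer_delta \<phi> a c b = \<phi> c $ a $ b - \<phi> b $ a $ c"

text \<open>Components of the vector-valued 2-form \<open>\<Omega>\<close> in the frame formed by the columns of \<open>K\<close>.\<close>

definition frame_components :: "real^'n^'n \<Rightarrow> ('n \<Rightarrow> 'n \<Rightarrow> 'n \<Rightarrow> real) \<Rightarrow> 'n \<Rightarrow> 'n \<Rightarrow> 'n \<Rightarrow> real" where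
  "frame_components K \<Omega> a c b = (transpose K ** (\<chi> j k. \<Omega> a j k) ** K) $ c $ b"

lemma matrix_diff_ldistrib: "(A::'a::ring_1^'n^'m) ** (B - C) = A ** B - A ** C"
  by (simp add: matrix_matrix_mult_def vec_eq_iff sum_subtractf right_diff_distrib)

lemma matrix_diff_rdistrib: "((A::'a::ring_1^'n^'m) - B) ** C = A ** C - B ** C"
  by (simp add: matrix_matrix_mult_def vec_eq_iff sum_subtractf left_diff_distrib)

lemma congruence_inverse:
  fixes H K :: "'a::comm_ring_1^'n^'n"
  assumes "H ** K = mat 1" "K ** H = mat 1"
  shows "W = transpose H ** Y ** H \<longleftrightarrow> transpose K ** W ** K = Y"
proof
  have KH': "transpose K ** transpose H = mat 1" and HK': "transpose H ** transpose K = mat 1"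
    using assms by (metis matrix_transpose_mul transpose_mat)+
  show "transpose K ** W ** K = Y" if "W = transpose H ** Y ** H"
  proof -
    have "transpose K ** W ** K = (transpose K ** transpose H) ** Y ** (H ** K)"
      by (simp add: that matrix_mul_assoc)
    then show ?thesis
      by (simp add: KH' assms(1))
  qed
  show "W = transpose H ** Y ** H" if "transpose K ** W ** K = Y"
  proof -
    have "transpose H ** Y ** H = (transpose H ** transpose K) ** W ** (K ** H)"
      by (simp add: that[symmetric] matrix_mul_assoc)
    then show ?thesis
      by (simp add: HK' assms(2))
  qed
qed

lemma coframe_change:
  fixes H K :: "real^'n^'n" and \<theta> \<phi> :: "'n \<Rightarrow> real^'n^'n"
  assumes "H ** K = mat 1" "K ** H = mat 1"
    and \<theta>: "\<And>j. \<theta> j = (\<Sum>c\<in>UNIV. H $ c $ j *\<^sub>R \<phi> c)"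
  shows "(\<forall>a j k. \<Omega> a j k = - (\<Sum>b\<in>UNIV. \<theta> j $ a $ b * H $ b $ k - \<theta> k $ a $ b * H $ b $ j))
     \<longleftrightarrow> (\<forall>a c b. frame_components K \<Omega> a c b = - spencer_delta \<phi> a c b)"
proof -
  have "(\<forall>j k. \<Omega> a j k = - (\<Sum>b\<in>UNIV. \<theta> j $ a $ b * H $ b $ k - \<theta> k $ a $ b * H $ b $ j))
     \<longleftrightarrow> (\<forall>c b. frame_components K \<Omega> a c b = - spencer_delta \<phi> a c b)" for a
  proof -
    define P where "P = (\<chi> c b. \<phi> c $ a $ b)"
    define \<Theta> where "\<Theta> = (\<chi> j b. \<theta> j $ a $ b)"
    have "\<Theta> = transpose H ** P"
      by (simp add: \<Theta>_def P_def \<theta> vec_eq_iff matrix_matrix_mult_def transpose_def)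
    then have skew: "transpose (\<Theta> ** H) - \<Theta> ** H = transpose H ** (transpose P - P) ** H"
      by (simp add: matrix_transpose_mul matrix_mul_assoc matrix_diff_ldistrib matrix_diff_rdistrib)
    have "(transpose (\<Theta> ** H) - \<Theta> ** H) $ j $ k
        = - (\<Sum>b\<in>UNIV. \<theta> j $ a $ b * H $ b $ k - \<theta> k $ a $ b * H $ b $ j)" for j k
      by (simp add: \<Theta>_def matrix_matrix_mult_def transpose_def sum_subtractf)
    then have "(\<forall>j k. \<Omega> a j k = - (\<Sum>b\<in>UNIV. \<theta> j $ a $ b * H $ b $ k - \<theta> k $ a $ b * H $ b $ j))
        \<longleftrightarrow> (\<chi> j k. \<Omega> a j k) = transpose H ** (transpose P - P) ** H"
      by (simp add: vec_eq_iff flip: skew)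
    also have "\<dots> \<longleftrightarrow> transpose K ** (\<chi> j k. \<Omega> a j k) ** K = transpose P - P"
      by (rule congruence_inverse[OF assms(1,2)])
    also have "\<dots> \<longleftrightarrow> (\<forall>c b. frame_components K \<Omega> a c b = - spencer_delta \<phi> a c b)"
      by (simp add: vec_eq_iff frame_components_def spencer_delta_def P_def transpose_def)
    finally show ?thesis .
  qed
  then show ?thesis
    by blast
qed

lemma frame_coefficients_inverse:
  fixes H K :: "real^'n^'n" and \<theta> :: "'n \<Rightarrow> 'v::real_vector"
  assumes "K ** H = mat 1"
  shows "(\<Sum>c\<in>UNIV. H $ c $ j *\<^sub>R (\<Sum>i\<in>UNIV. K $ i $ c *\<^sub>R \<theta> i)) = \<theta> j"
proof -
  have "(\<Sum>c\<in>UNIV. H $ c $ j *\<^sub>R (\<Sum>i\<in>UNIV. K $ i $ c *\<^sub>R \<theta> i))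
      = (\<Sum>c\<in>UNIV. \<Sum>i\<in>UNIV. (K $ i $ c * H $ c $ j) *\<^sub>R \<theta> i)"
    by (simp add: scaleR_sum_right mult.commute)
  also have "\<dots> = (\<Sum>i\<in>UNIV. \<Sum>c\<in>UNIV. (K $ i $ c * H $ c $ j) *\<^sub>R \<theta> i)"
    by (rule sum.swap)
  also have "\<dots> = (\<Sum>i\<in>UNIV. (K ** H) $ i $ j *\<^sub>R \<theta> i)"
    by (simp add: matrix_matrix_mult_def scaleR_sum_left)
  also have "\<dots> = \<theta> j"
  proof -
    have "(mat 1 :: real^'n^'n) $ i $ j *\<^sub>R \<theta> i = (if i = j then \<theta> j else 0)" for i
      by (simp add: mat_def)
    then show ?thesis
      by (simp add: assms)
  qed
  finally show ?thesis .
qed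

section \<open>Intrinsic torsion\<close>

text \<open>
  A basis of the linear functionals vanishing on the range of \<open>spencer_delta\<close> restricted to
  g3-valued forms, found by Gaussian elimination: that restriction is injective, from dimension
  16 into dimension 24.
\<close>

definition torsion_invariants :: "(4 \<Rightarrow> 4 \<Rightarrow> 4 \<Rightarrow> real) \<Rightarrow> real list" where
  "torsion_invariants \<tau> =
    [\<tau> 0 2 3,
     2 * \<tau> 0 1 3 - \<tau> 1 2 3,
     \<tau> 0 0 3 + 3 * \<tau> 0 1 2 - 2 * \<tau> 1 1 3 + \<tau> 2 2 3,
     \<tau> 3 0 1,
     2 * \<tau> 3 0 2 - \<tau> 2 0 1,
     \<tau> 1 0 1 - 2 * \<tau> 2 0 2 + \<tau> 3 0 3 + 3 * \<tau> 3 1 2,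
     2 * \<tau> 1 0 2 - \<tau> 0 0 1 - \<tau> 2 0 3 - 3 * \<tau> 2 1 2 + 2 * \<tau> 3 1 3,
     \<tau> 1 0 3 - 2 * \<tau> 0 0 2 + 3 * \<tau> 1 1 2 - 2 * \<tau> 2 1 3 + \<tau> 3 2 3]"

text \<open>
  Solves sixteen of the twenty-four equations \<open>\<tau> = - spencer_delta \<phi>\<close>; the other eight then
  amount to the vanishing of \<open>torsion_invariants \<tau>\<close>.
\<close>

definition torsion_solution :: "(4 \<Rightarrow> 4 \<Rightarrow> 4 \<Rightarrow> real) \<Rightarrow> 4 \<Rightarrow> real^4^4" where
  "torsion_solution \<tau> c =
    (if c = 0 then
       drho3 (2/3 * \<tau> 3 0 3 - \<tau> 2 0 2) (- \<tau> 3 0 2) (- \<tau> 2 0 3 / 3) (- \<tau> 3 0 3 / 3)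
     else if c = 1 then
       drho3 (2/3 * \<tau> 1 0 2 - 4/9 * \<tau> 2 0 3 - \<tau> 2 1 2 + 2/3 * \<tau> 3 1 3) (- \<tau> 3 1 2)
         (2/9 * \<tau> 1 0 3 - \<tau> 2 1 3 / 3) (- \<tau> 3 1 3 / 3)
     else if c = 2 then
       drho3 (\<tau> 1 0 3 / 6 + \<tau> 1 1 2 / 2 - \<tau> 2 1 3 / 3 + \<tau> 3 2 3 / 6)
         (\<tau> 1 0 2 / 3 - 2/9 * \<tau> 2 0 3) (\<tau> 0 1 2) (\<tau> 1 0 3 / 9 - \<tau> 3 2 3 / 3)
     else
       drho3 (2/3 * \<tau> 1 1 3 - \<tau> 0 1 2 - \<tau> 2 2 3 / 3) (\<tau> 1 0 3 / 3) (\<tau> 1 2 3 / 2)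
         (2 * \<tau> 0 1 2 - \<tau> 1 1 3 / 3 + 2/3 * \<tau> 2 2 3))"

lemma torsion_solution_in_g3: "torsion_solution \<tau> c \<in> g3"
  by (simp add: torsion_solution_def drho3_in_g3)

lemma torsion_invariants_spencer_delta:
  assumes "\<And>c. \<phi> c \<in> g3"
  shows "set (torsion_invariants (\<lambda>a c b. - spencer_delta \<phi> a c b)) \<subseteq> {0}"
proof -
  obtain \<alpha> \<beta> \<gamma> \<delta> where "\<And>c. \<phi> c = drho3 (\<alpha> c) (\<beta> c) (\<gamma> c) (\<delta> c)"
    using assms unfolding in_g3_iff by metis
  then show ?thesis
    by (simp add: torsion_invariants_def spencer_delta_def drho3_def)
qed

lemma spencer_delta_torsion_solution:
  assumes skew: "\<And>a c b. \<tau> a c b = - \<tau> a b c"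
    and inv: "set (torsion_invariants \<tau>) \<subseteq> {0}"
  shows "\<tau> a c b = - spencer_delta (torsion_solution \<tau>) a c b"
proof -
  have diag: "\<tau> a c c = 0" for a c
    using skew[of a c c] by simp
  note lower = skew[of _ 1 0] skew[of _ 2 0] skew[of _ 3 0] skew[of _ 2 1] skew[of _ 3 1] skew[of _ 3 2]
  have "\<forall>a c b. \<tau> a c b = - spencer_delta (torsion_solution \<tau>) a c b"
    using inv unfolding forall_UNIV_4
    by (simp add: torsion_invariants_def spencer_delta_def torsion_solution_def drho3_def diag lower;
        linarith)
  then show ?thesis
    by blast
qed

lemma smooth_on_torsion_solution:
  assumes "open U" "\<And>a c b. smooth_on U (\<lambda>p. \<tau> p a c b)"
  shows "smooth_on U (\<lambda>p. torsion_solution (\<tau> p) c $ a $ b)"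
proof -
  have "\<forall>c a b. smooth_on U (\<lambda>p. torsion_solution (\<tau> p) c $ a $ b)"
    unfolding forall_UNIV_4 by (simp add: torsion_solution_def drho3_def smooth_on_closure assms)
  then show ?thesis
    by blast
qed

definition dcoframe :: "(real^4 \<Rightarrow> real^4^4) \<Rightarrow> real^4 \<Rightarrow> 4 \<Rightarrow> 4 \<Rightarrow> 4 \<Rightarrow> real" where
  "dcoframe \<eta> p a j k = pd j (\<lambda>q. \<eta> q $ a $ k) p - pd k (\<lambda>q. \<eta> q $ a $ j) p"

definition structure_equation :: "(real^4 \<Rightarrow> real^4^4) \<Rightarrow> (4 \<Rightarrow> real^4^4) \<Rightarrow> real^4 \<Rightarrow> bool" where
  "structure_equation \<eta> \<theta> p \<longleftrightarrow> (\<forall>a j k. dcoframe \<eta> p a j k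
     = - (\<Sum>b\<in>UNIV. \<theta> j $ a $ b * \<eta> p $ b $ k - \<theta> k $ a $ b * \<eta> p $ b $ j))"

lemma torsion_free_Gstr_iff:
  "torsion_free_Gstr U \<eta> \<longleftrightarrow> (\<exists>\<theta>. (\<forall>j a b. smooth_on U (\<lambda>p. \<theta> p j $ a $ b)) \<and>
     (\<forall>p\<in>U. (\<forall>j. \<theta> p j \<in> g3) \<and> structure_equation \<eta> (\<theta> p) p))"
  unfolding torsion_free_Gstr_def structure_equation_def dcoframe_def by blast

definition frame_deriv :: "real^4^4 \<Rightarrow> (real^4 \<Rightarrow> real) \<Rightarrow> real^4 \<Rightarrow> 4 \<Rightarrow> real" where
  "frame_deriv K f p c = (\<Sum>j\<in>UNIV. K $ j $ c * pd j f p)"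

lemma frame_deriv_const [simp]: "frame_deriv K (\<lambda>q. r) p c = 0"
  by (simp add: frame_deriv_def)

lemma frame_components_dcoframe:
  "frame_components K (dcoframe \<eta> p) a c b
     = (\<Sum>k\<in>UNIV. frame_deriv K (\<lambda>q. \<eta> q $ a $ k) p c * K $ k $ b)
     - (\<Sum>j\<in>UNIV. frame_deriv K (\<lambda>q. \<eta> q $ a $ j) p b * K $ j $ c)"
  unfolding frame_components_def frame_deriv_def dcoframe_def
  by (simp add: matrix_matrix_mult_def transpose_def sum_UNIV_4; algebra)

section \<open>The coframe h dx\<close>

definition hmat_inv :: "(real^4 \<Rightarrow> real) \<Rightarrow> (real^4 \<Rightarrow> real) \<Rightarrow> (real^4 \<Rightarrow> real) \<Rightarrow> (real^4 \<Rightarrow> real)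
    \<Rightarrow> real^4 \<Rightarrow> real^4^4" where
  "hmat_inv A B C D p = (\<chi> a j.
     if a = j then 1
     else if (a = 0 \<and> j = 1) \<or> (a = 1 \<and> j = 2) \<or> (a = 2 \<and> j = 3) then - A p
     else if a = 0 \<and> j = 2 then (A p)^2 - B p
     else if a = 1 \<and> j = 3 then (A p)^2 - C p
     else if a = 0 \<and> j = 3 then A p * B p + A p * C p - (A p)^3 - D p
     else 0)"

lemma hmat_mult_hmat_inv:
  "hmat A B C D p ** hmat_inv A B C D p = mat 1"
  "hmat_inv A B C D p ** hmat A B C D p = mat 1"
  unfolding vec_eq_iff forall_UNIV_4
  by (simp_all add: matrix_matrix_mult_def sum_UNIV_4 hmat_def hmat_inv_def mat_def) algebra+

lemma frame_deriv_hmat_inv: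
  "frame_deriv (hmat_inv A B C D p) f p 0 = V0 f p"
  "frame_deriv (hmat_inv A B C D p) f p 1 = V1 A f p"
  "frame_deriv (hmat_inv A B C D p) f p 2 = V2 A B f p"
  "frame_deriv (hmat_inv A B C D p) f p 3 = V3 A B C D f p"
  unfolding frame_deriv_def V0_def V1_def V2_def V3_def
  by (simp_all add: sum_UNIV_4 hmat_inv_def) algebra+

definition hmat_torsion :: "(real^4 \<Rightarrow> real) \<Rightarrow> (real^4 \<Rightarrow> real) \<Rightarrow> (real^4 \<Rightarrow> real) \<Rightarrow> (real^4 \<Rightarrow> real)
    \<Rightarrow> real^4 \<Rightarrow> 4 \<Rightarrow> 4 \<Rightarrow> 4 \<Rightarrow> real" where
  "hmat_torsion A B C D p = frame_components (hmat_inv A B C D p) (dcoframe (hmat A B C D) p)"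

lemma hmat_torsion_skew: "hmat_torsion A B C D p a b c = - hmat_torsion A B C D p a c b"
  by (simp add: hmat_torsion_def frame_components_dcoframe)

lemma torsion_invariants_hmat:
  "torsion_invariants (hmat_torsion A B C D p) =
    [V2 A B D p - V3 A B C D B p - A p * V2 A B B p - C p * V2 A B A p
       + A p * V3 A B C D A p + (A p)^2 * V2 A B A p,
     2 * V1 A D p - V2 A B C p - 2 * A p * V1 A B p - V3 A B C D A p
       + A p * V2 A B A p + 2 * (A p)^2 * V1 A A p - 2 * C p * V1 A A p,
     V0 D p - 2 * V1 A C p + 3 * V1 A B p - A p * V0 B p - 2 * V2 A B A p
       - A p * V1 A A p - C p * V0 A p + (A p)^2 * V0 A p,
     0, 0, 0, 0,
     V0 C p - 2 * V0 B p + V1 A A p + A p * V0 A p]"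
  unfolding torsion_invariants_def hmat_torsion_def frame_components_dcoframe
  by (simp add: sum_UNIV_4 hmat_def, simp add: frame_deriv_hmat_inv,
      simp add: hmat_inv_def algebra_simps)

lemma hmat_frame_equation:
  assumes "\<And>j. \<theta> j = (\<Sum>c\<in>UNIV. hmat A B C D p $ c $ j *\<^sub>R \<phi> c)"
  shows "structure_equation (hmat A B C D) \<theta> p
     \<longleftrightarrow> (\<forall>a c b. hmat_torsion A B C D p a c b = - spencer_delta \<phi> a c b)"
  using coframe_change[OF hmat_mult_hmat_inv assms, of "dcoframe (hmat A B C D) p"]
  unfolding hmat_torsion_def structure_equation_def .

lemma smooth_on_hmat:
  assumes "smooth_on U A" "smooth_on U B" "smooth_on U C" "smooth_on U D"
  shows "smooth_on U (\<lambda>p. hmat A B C D p $ i $ j)"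
proof -
  have "\<forall>i j. smooth_on U (\<lambda>p. hmat A B C D p $ i $ j)"
    unfolding forall_UNIV_4 by (simp add: hmat_def smooth_on_const assms)
  then show ?thesis
    by blast
qed

lemma smooth_on_hmat_inv:
  assumes "open U" "smooth_on U A" "smooth_on U B" "smooth_on U C" "smooth_on U D"
  shows "smooth_on U (\<lambda>p. hmat_inv A B C D p $ i $ j)"
proof -
  have "\<forall>i j. smooth_on U (\<lambda>p. hmat_inv A B C D p $ i $ j)"
    unfolding forall_UNIV_4 by (simp add: hmat_inv_def smooth_on_closure assms)
  then show ?thesis
    by blast
qed

lemma smooth_on_hmat_torsion:
  assumes "open U" "smooth_on U A" "smooth_on U B" "smooth_on U C" "smooth_on U D"
  shows "smooth_on U (\<lambda>p. hmat_torsion A B C D p a c b)"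
  unfolding hmat_torsion_def frame_components_def dcoframe_def
  by (simp add: matrix_matrix_mult_def transpose_def smooth_on_closure smooth_on_hmat
      smooth_on_hmat_inv assms)

definition hmat_connection :: "(real^4 \<Rightarrow> real) \<Rightarrow> (real^4 \<Rightarrow> real) \<Rightarrow> (real^4 \<Rightarrow> real)
    \<Rightarrow> (real^4 \<Rightarrow> real) \<Rightarrow> real^4 \<Rightarrow> 4 \<Rightarrow> real^4^4" where
  "hmat_connection A B C D p j =
    (\<Sum>c\<in>UNIV. hmat A B C D p $ c $ j *\<^sub>R torsion_solution (hmat_torsion A B C D p) c)"

lemma hmat_connection_in_g3: "hmat_connection A B C D p j \<in> g3"
  unfolding hmat_connection_def
  by (intro subspace_sum[OF subspace_g3] subspace_scale[OF subspace_g3] torsion_solution_in_g3)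

lemma smooth_on_hmat_connection:
  assumes "open U" "smooth_on U A" "smooth_on U B" "smooth_on U C" "smooth_on U D"
  shows "smooth_on U (\<lambda>p. hmat_connection A B C D p j $ a $ b)"
  unfolding hmat_connection_def
  by (simp add: smooth_on_closure smooth_on_hmat assms
      smooth_on_torsion_solution[OF assms(1) smooth_on_hmat_torsion[OF assms]])

lemma structure_equation_hmat_connection:
  assumes "set (torsion_invariants (hmat_torsion A B C D p)) \<subseteq> {0}"
  shows "structure_equation (hmat A B C D) (hmat_connection A B C D p) p"
  unfolding hmat_frame_equation[OF hmat_connection_def]
  using spencer_delta_torsion_solution[OF hmat_torsion_skew assms] by blast

lemma torsion_invariants_vanish:
  assumes "\<And>j. \<theta> j \<in> g3" "structure_equation (hmat A B C D) \<theta> p"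
  shows "set (torsion_invariants (hmat_torsion A B C D p)) \<subseteq> {0}"
proof -
  define \<phi> where "\<phi> c = (\<Sum>j\<in>UNIV. hmat_inv A B C D p $ j $ c *\<^sub>R \<theta> j)" for c
  have "\<phi> c \<in> g3" for c
    unfolding \<phi>_def using assms(1)
    by (intro subspace_sum[OF subspace_g3] subspace_scale[OF subspace_g3])
  moreover have "\<theta> j = (\<Sum>c\<in>UNIV. hmat A B C D p $ c $ j *\<^sub>R \<phi> c)" for j
    unfolding \<phi>_def by (rule frame_coefficients_inverse[OF hmat_mult_hmat_inv(2), symmetric])
  then have "hmat_torsion A B C D p = (\<lambda>a c b. - spencer_delta \<phi> a c b)"
    using hmat_frame_equation assms(2) by blast
  ultimately show ?thesis
    using torsion_invariants_spencer_delta by metis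
qed

theorem theorem3:
  fixes U :: "(real^4) set" and A B C D :: "real^4 \<Rightarrow> real"
  assumes "open U"
    and "smooth_on U A" and "smooth_on U B" and "smooth_on U C" and "smooth_on U D"
  shows "torsion_free_Gstr U (hmat A B C D) \<longleftrightarrow>
    (\<forall>p\<in>U.
       V2 A B D p - V3 A B C D B p - A p * V2 A B B p - C p * V2 A B A p
         + A p * V3 A B C D A p + (A p)^2 * V2 A B A p = 0 \<and>
       2 * V1 A D p - V2 A B C p - 2 * A p * V1 A B p - V3 A B C D A p
         + A p * V2 A B A p + 2 * (A p)^2 * V1 A A p - 2 * C p * V1 A A p = 0 \<and>
       V0 D p - 2 * V1 A C p + 3 * V1 A B p - A p * V0 B p - 2 * V2 A B A p
         - A p * V1 A A p - C p * V0 A p + (A p)^2 * V0 A p = 0 \<and>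
       V0 C p - 2 * V0 B p + V1 A A p + A p * V0 A p = 0)"
proof -
  have "torsion_free_Gstr U (hmat A B C D)
      \<longleftrightarrow> (\<forall>p\<in>U. set (torsion_invariants (hmat_torsion A B C D p)) \<subseteq> {0})"
  proof
    assume "torsion_free_Gstr U (hmat A B C D)"
    then show "\<forall>p\<in>U. set (torsion_invariants (hmat_torsion A B C D p)) \<subseteq> {0}"
      unfolding torsion_free_Gstr_iff using torsion_invariants_vanish by metis
  next
    assume "\<forall>p\<in>U. set (torsion_invariants (hmat_torsion A B C D p)) \<subseteq> {0}"
    then show "torsion_free_Gstr U (hmat A B C D)"
      unfolding torsion_free_Gstr_iff
      using smooth_on_hmat_connection[OF assms] hmat_connection_in_g3
        structure_equation_hmat_connection by blast
  qed
  then show ?thesis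
    by (simp add: torsion_invariants_hmat)
qed

end
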